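(* Let $G$ be a $\sigma$-compact locally compact Abelian group, $\Lambda\subset G$ a subset of a model set, and $F\subset G$ a finite nonempty set. Then $\Lambda+F$ is a subset of a model set.
   Context: A cut and project scheme $(G\times H,\widetilde L)$: $H$ a locally compact Abelian group, $\widetilde L\subset G\times H$ a discrete cocompact subgroup with $\pi_1|_{\widetilde L}$ injective and $\pi_2(\widetilde L)$ dense in $H$; $x^\star:=\pi_2((\pi_1|_{\widetilde L})^{-1}(x))$. A model set is $\Lambda(W):=\{x\in\pi_1(\widetilde L):x^\star\in W\}$ for some cut and project scheme and some precompact $W\subset H$ with nonempty interior. *)

theory Defs
  imports "HOL-Analysis.Analysis"
begin

text \<open>A (Hausdorff) locally compact Abelian group given by explicit data, with carrier
  the topspace of its topology. This carrier-based representation is used for the internal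
  space H, because H is existentially quantified in the notion of a model set.\<close>

record 'u lca_data =
  lca_top  :: "'u topology"
  lca_add  :: "'u \<Rightarrow> 'u \<Rightarrow> 'u"
  lca_zero :: "'u"
  lca_neg  :: "'u \<Rightarrow> 'u"

definition lca_group :: "'u lca_data \<Rightarrow> bool" where
  "lca_group H \<longleftrightarrow>
     (let C = topspace (lca_top H); p = lca_add H; z = lca_zero H; n = lca_neg H in
       z \<in> C \<and>
       (\<forall>a\<in>C. \<forall>b\<in>C. p a b \<in> C) \<and>
       (\<forall>a\<in>C. n a \<in> C) \<and>
       (\<forall>a\<in>C. \<forall>b\<in>C. \<forall>c\<in>C. p (p a b) c = p a (p b c)) \<and>
       (\<forall>a\<in>C. \<forall>b\<in>C. p a b = p b a) \<and>
       (\<forall>a\<in>C. p z a = a) \<and>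
       (\<forall>a\<in>C. p (n a) a = z) \<and>
       continuous_map (prod_topology (lca_top H) (lca_top H)) (lca_top H) (\<lambda>(a, b). p a b) \<and>
       continuous_map (lca_top H) (lca_top H) n \<and>
       Hausdorff_space (lca_top H) \<and>
       locally_compact_space (lca_top H))"

definition cps :: "'u lca_data \<Rightarrow> ('g::{topological_ab_group_add,t2_space} \<times> 'u) set \<Rightarrow> bool" where
  "cps H L \<longleftrightarrow>
     (let C = topspace (lca_top H); T = prod_topology (euclidean :: 'g topology) (lca_top H);
          padd = (\<lambda>p q. (fst p + fst q, lca_add H (snd p) (snd q))) in
       lca_group H \<and>
       L \<subseteq> UNIV \<times> C \<and>
       (0, lca_zero H) \<in> L \<and>
       (\<forall>p\<in>L. \<forall>q\<in>L. padd p q \<in> L) \<and>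
       (\<forall>p\<in>L. (- fst p, lca_neg H (snd p)) \<in> L) \<and>
       (\<forall>p\<in>L. \<exists>U. openin T U \<and> U \<inter> L = {p}) \<and>
       (\<exists>K. compactin T K \<and> {padd k l | k l. k \<in> K \<and> l \<in> L} = UNIV \<times> C) \<and>
       inj_on fst L \<and>
       (lca_top H) closure_of (snd ` L) = C)"

definition star_map :: "('g \<times> 'u) set \<Rightarrow> 'g \<Rightarrow> 'u" where
  "star_map L x = snd (THE p. p \<in> L \<and> fst p = x)"

definition model_set :: "('g \<times> 'u) set \<Rightarrow> 'u set \<Rightarrow> 'g set" where
  "model_set L W = {x \<in> fst ` L. star_map L x \<in> W}"

definition subset_of_model_set ::
    "'u itself \<Rightarrow> 'g::{topological_ab_group_add,t2_space} set \<Rightarrow> bool" where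
  "subset_of_model_set _ \<Lambda> \<longleftrightarrow>
     (\<exists>(H::'u lca_data) (L::('g \<times> 'u) set) W.
        cps H L \<and> W \<subseteq> topspace (lca_top H) \<and>
        compactin (lca_top H) ((lca_top H) closure_of W) \<and>
        (lca_top H) interior_of W \<noteq> {} \<and>
        \<Lambda> \<subseteq> model_set L W)"

end

theory Submission
  imports Defs "HOL-Algebra.Group"
begin

text \<open>Let \<open>\<Lambda> \<subseteq> \<Lambda>(W)\<close> for a scheme \<open>(G \<times> H, L)\<close> and let \<open>t \<in> G\<close>. The integers \<open>k\<close> with
  \<open>k t \<in> \<pi>\<^sub>1(L)\<close> form a subgroup \<open>q\<int>\<close>; put \<open>s = (q t)\<^sup>\<star>\<close>. In the extension
  \<open>H' = (H \<times> \<int>) / \<langle>(s, -q)\<rangle>\<close> of \<open>\<int>/q\<int>\<close> by \<open>H\<close>, the group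
  \<open>L' = {(x + k t, [x\<^sup>\<star>, k]) | x \<in> \<pi>\<^sub>1(L), k \<in> \<int>}\<close> is again a lattice in \<open>G \<times> H'\<close> with injective
  first and dense second projection, and \<open>\<Lambda> \<union> (\<Lambda> + t)\<close> lies in the model set whose window is the
  image of \<open>W \<times> {0, 1}\<close> in \<open>H'\<close>. Induction over \<open>F\<close> then covers \<open>\<Lambda> + F\<close>.

  Every step changes the type of the internal group. It is moved back into a fixed type by sending
  \<open>h \<in> H\<close> to the family of sets \<open>\<pi>\<^sub>1(L \<inter> (G \<times> V))\<close>, \<open>V\<close> an open neighbourhood of \<open>h\<close>; this is
  injective because \<open>\<pi>\<^sub>2(L)\<close> is dense and \<open>H\<close> is Hausdorff.\<close>

text \<open>The HOL-Algebra notation for closures under an equivalence relation would clash with the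
  topological \<open>closure_of\<close>.\<close>

no_notation eq_closure_of (\<open>closure'_of\<index>\<close>)

lemma star_map_eq:
  assumes "inj_on fst L" "p \<in> L"
  shows "star_map L (fst p) = snd p"
proof -
  have "(THE q. q \<in> L \<and> fst q = fst p) = p"
    using assms by (intro the_equality) (auto simp: inj_on_def)
  then show ?thesis by (simp add: star_map_def)
qed

lemma model_set_eq:
  assumes "inj_on fst L"
  shows "model_set L W = fst ` (L \<inter> UNIV \<times> W)"
  using star_map_eq[OF assms] by (force simp: model_set_def)

lemma subset_of_model_set_mono:
  "subset_of_model_set TYPE('u) B \<Longrightarrow> A \<subseteq> B \<Longrightarrow> subset_of_model_set TYPE('u) A"
  unfolding subset_of_model_set_def by blast

definition window :: "'u lca_data \<Rightarrow> 'u set \<Rightarrow> bool" where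
  "window H W \<longleftrightarrow> W \<subseteq> topspace (lca_top H) \<and> compactin (lca_top H) (lca_top H closure_of W)
     \<and> lca_top H interior_of W \<noteq> {}"

lemma subset_of_model_set_iff:
  "subset_of_model_set TYPE('u) \<Lambda> \<longleftrightarrow>
     (\<exists>(H :: 'u lca_data) L W. cps H L \<and> window H W \<and> \<Lambda> \<subseteq> model_set L W)"
  by (simp add: subset_of_model_set_def window_def)

lemma window_Un:
  assumes "window H W" "window H W'"
  shows "window H (W \<union> W')"
proof -
  have "lca_top H interior_of W \<subseteq> lca_top H interior_of (W \<union> W')"
    by (rule interior_of_mono) blast
  then show ?thesis
    using assms unfolding window_def by (simp add: compactin_Un) blast
qed

lemma window_homeomorphic_image:
  assumes f: "homeomorphic_map (lca_top H) (lca_top H') f" and W: "window H W"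
  shows "window H' (f ` W)"
proof -
  have sub: "W \<subseteq> topspace (lca_top H)"
    using W by (simp add: window_def)
  have "compactin (lca_top H') (f ` (lca_top H closure_of W))"
    using W homeomorphic_map_compactness[OF f closure_of_subset_topspace] by (simp add: window_def)
  moreover have "f ` W \<subseteq> topspace (lca_top H')"
    using sub homeomorphic_imp_surjective_map[OF f] by blast
  ultimately show ?thesis
    using W by (simp add: window_def homeomorphic_map_closure_of[OF f sub] homeomorphic_map_interior_of[OF f sub])
qed

definition univ_add_group :: "'a::ab_group_add monoid" where
  "univ_add_group = \<lparr>carrier = UNIV, mult = (+), one = 0\<rparr>"

lemma comm_group_univ_add_group: "comm_group univ_add_group"
  unfolding univ_add_group_def
proof (rule comm_groupI; simp add: add.assoc add.commute)
  show "\<And>x::'a. \<exists>y. x + y = 0"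
    using add.right_inverse by blast
qed

interpretation univ_add: comm_group "univ_add_group :: 'a::ab_group_add monoid"
  rewrites "carrier univ_add_group = UNIV" and "mult univ_add_group = (+)"
    and "one univ_add_group = 0"
  by (rule comm_group_univ_add_group) (simp_all add: univ_add_group_def)

lemma univ_add_group_simps [simp]:
  "carrier univ_add_group = UNIV" "x \<otimes>\<^bsub>univ_add_group\<^esub> y = x + y" "\<one>\<^bsub>univ_add_group\<^esub> = 0"
  by (simp_all add: univ_add_group_def)

lemma inv_univ_add_group [simp]: "inv\<^bsub>univ_add_group\<^esub> x = - x"
  by (rule univ_add.inv_equality) simp_all

abbreviation int_multiple :: "int \<Rightarrow> 'a::ab_group_add \<Rightarrow> 'a" where
  "int_multiple k x \<equiv> x [^]\<^bsub>univ_add_group\<^esub> k"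

lemma int_subgroup_mult_mem:
  fixes I :: "int set"
  assumes zero: "0 \<in> I" and diff: "\<And>a b. a \<in> I \<Longrightarrow> b \<in> I \<Longrightarrow> a - b \<in> I" and n: "n \<in> I"
  shows "j * n \<in> I"
proof (induction j rule: int_induct[where k = 0])
  case (step1 i)
  have "i * n + n = i * n - (0 - n)"
    by simp
  then show ?case
    using diff[OF step1(2) diff[OF zero n]] by (simp add: distrib_right)
next
  case (step2 i)
  then show ?case
    using diff[OF _ n] by (simp add: left_diff_distrib)
qed (use zero in simp)

lemma int_subgroup_eq_multiples:
  fixes I :: "int set"
  assumes zero: "0 \<in> I" and diff: "\<And>a b. a \<in> I \<Longrightarrow> b \<in> I \<Longrightarrow> a - b \<in> I"
  obtains q where "I = {k. q dvd k}"
proof (cases "I \<subseteq> {0}")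
  case True
  with zero show ?thesis
    by (intro that[of 0]) auto
next
  case False
  obtain a where a: "a \<in> I" "a \<noteq> 0"
    using False by auto
  have "\<bar>a\<bar> \<in> I"
    using a diff[OF zero a(1)] by (cases "a \<ge> 0") auto
  then have ex: "\<exists>n. 0 < n \<and> int n \<in> I"
    using a(2) by (intro exI[of _ "nat \<bar>a\<bar>"]) auto
  define n where "n = (LEAST n. 0 < n \<and> int n \<in> I)"
  have n: "0 < n" "int n \<in> I"
    using LeastI_ex[OF ex] by (simp_all add: n_def)
  have n_min: "n \<le> m" if "0 < m" "int m \<in> I" for m
    using that by (simp add: n_def Least_le)
  have multiples: "j * int n \<in> I" for j
    using zero diff n(2) by (rule int_subgroup_mult_mem)
  have mod_zero: "k mod int n = 0" if "k \<in> I" for k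
  proof (rule ccontr)
    assume "k mod int n \<noteq> 0"
    moreover have "k mod int n = k - (k div int n) * int n"
      by (simp add: minus_div_mult_eq_mod)
    then have "k mod int n \<in> I"
      using diff[OF that multiples] by simp
    moreover have "0 \<le> k mod int n" "k mod int n < int n"
      using n(1) by simp_all
    ultimately show False
      using n_min[of "nat (k mod int n)"] by simp
  qed
  have "I = {k. int n dvd k}"
  proof (intro subset_antisym subsetI)
    fix k assume "k \<in> I"
    then show "k \<in> {k. int n dvd k}"
      using mod_zero by (simp add: mod_eq_0_iff_dvd)
  next
    fix k assume "k \<in> {k. int n dvd k}"
    then obtain j where "k = int n * j"
      by (auto simp: dvd_def)
    then show "k \<in> I"
      using multiples[of j] by (simp add: mult.commute)
  qed
  then show ?thesis
    by (rule that)
qed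

lemma div_add_split: "((a::int) + b) div q = a div q + (a mod q + b) div q"
  using div_add1_eq[of a b q] div_add1_eq[of "a mod q" b q] by simp

lemma lca_groupD:
  assumes "lca_group H"
  defines "C \<equiv> topspace (lca_top H)" and "p \<equiv> lca_add H" and "z \<equiv> lca_zero H" and "n \<equiv> lca_neg H"
  shows "z \<in> C" "\<And>a b. a \<in> C \<Longrightarrow> b \<in> C \<Longrightarrow> p a b \<in> C" "\<And>a. a \<in> C \<Longrightarrow> n a \<in> C"
    "\<And>a b c. a \<in> C \<Longrightarrow> b \<in> C \<Longrightarrow> c \<in> C \<Longrightarrow> p (p a b) c = p a (p b c)"
    "\<And>a b. a \<in> C \<Longrightarrow> b \<in> C \<Longrightarrow> p a b = p b a"
    "\<And>a. a \<in> C \<Longrightarrow> p z a = a" "\<And>a. a \<in> C \<Longrightarrow> p (n a) a = z"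
    "continuous_map (prod_topology (lca_top H) (lca_top H)) (lca_top H) (\<lambda>(a, b). p a b)"
    "continuous_map (lca_top H) (lca_top H) n"
    "Hausdorff_space (lca_top H)" "locally_compact_space (lca_top H)"
  using assms unfolding lca_group_def Let_def by auto

definition lca_monoid :: "'u lca_data \<Rightarrow> 'u monoid" where
  "lca_monoid H = \<lparr>carrier = topspace (lca_top H), mult = lca_add H, one = lca_zero H\<rparr>"

lemma lca_monoid_simps [simp]:
  "carrier (lca_monoid H) = topspace (lca_top H)" "mult (lca_monoid H) = lca_add H"
  "one (lca_monoid H) = lca_zero H"
  by (simp_all add: lca_monoid_def)

lemma comm_group_lca_monoid:
  assumes "lca_group H"
  shows "comm_group (lca_monoid H)"
proof (rule comm_groupI)
  fix x assume "x \<in> carrier (lca_monoid H)"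
  then show "\<exists>y\<in>carrier (lca_monoid H). y \<otimes>\<^bsub>lca_monoid H\<^esub> x = \<one>\<^bsub>lca_monoid H\<^esub>"
    using lca_groupD(3,7)[OF assms] by auto
qed (use lca_groupD[OF assms] in auto)

lemma inv_lca_monoid:
  assumes "lca_group H" "a \<in> topspace (lca_top H)"
  shows "inv\<^bsub>lca_monoid H\<^esub> a = lca_neg H a"
  using group.inv_equality[OF comm_group.axioms(2)[OF comm_group_lca_monoid[OF assms(1)]]]
    lca_groupD[OF assms(1)] assms(2) by simp

lemma homeomorphic_map_lca_translation:
  assumes H: "lca_group H" and c: "c \<in> topspace (lca_top H)"
  shows "homeomorphic_map (lca_top H) (lca_top H) (\<lambda>h. lca_add H h c)"
proof -
  interpret comm_group "lca_monoid H"
    rewrites "carrier (lca_monoid H) = topspace (lca_top H)" and "mult (lca_monoid H) = lca_add H"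
      and "one (lca_monoid H) = lca_zero H"
    by (simp_all add: comm_group_lca_monoid[OF H])
  have cont: "continuous_map (lca_top H) (lca_top H) (\<lambda>h. lca_add H h c')"
    if "c' \<in> topspace (lca_top H)" for c'
  proof -
    have pair: "continuous_map (lca_top H) (prod_topology (lca_top H) (lca_top H)) (\<lambda>h. (h, c'))"
      using that by (intro continuous_map_pairedI) auto
    show ?thesis
      using continuous_map_compose[OF pair lca_groupD(8)[OF H]] by (simp add: o_def)
  qed
  have "homeomorphic_maps (lca_top H) (lca_top H) (\<lambda>h. lca_add H h c) (\<lambda>h. lca_add H h (inv\<^bsub>lca_monoid H\<^esub> c))"
    using cont[OF c] cont[OF inv_closed[OF c]] c by (simp add: homeomorphic_maps_def m_assoc)
  then show ?thesis
    by (rule homeomorphic_maps_imp_map)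
qed

locale cut_project =
  fixes H :: "'u lca_data" and L :: "('g::{topological_ab_group_add,t2_space} \<times> 'u) set"
  assumes cps: "cps H L"
begin

lemma
  shows internal_lca_group: "lca_group H"
    and lattice_subset: "L \<subseteq> UNIV \<times> topspace (lca_top H)"
    and zero_mem: "(0, lca_zero H) \<in> L"
    and add_mem: "\<And>p q. p \<in> L \<Longrightarrow> q \<in> L \<Longrightarrow> (fst p + fst q, lca_add H (snd p) (snd q)) \<in> L"
    and neg_mem: "\<And>p. p \<in> L \<Longrightarrow> (- fst p, lca_neg H (snd p)) \<in> L"
    and discrete: "\<And>p. p \<in> L \<Longrightarrow>
      \<exists>U. openin (prod_topology (euclidean::'g topology) (lca_top H)) U \<and> U \<inter> L = {p}"
    and cocompact: "\<exists>K. compactin (prod_topology (euclidean::'g topology) (lca_top H)) K \<and>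
      {(fst k + fst l, lca_add H (snd k) (snd l)) | k l. k \<in> K \<and> l \<in> L} = UNIV \<times> topspace (lca_top H)"
    and inj_fst: "inj_on fst L"
    and dense: "lca_top H closure_of (snd ` L) = topspace (lca_top H)"
  using cps unfolding cps_def Let_def by auto

end

sublocale cut_project \<subseteq> internal: comm_group "lca_monoid H"
  rewrites "carrier (lca_monoid H) = topspace (lca_top H)" and "mult (lca_monoid H) = lca_add H"
    and "one (lca_monoid H) = lca_zero H"
  by (rule comm_group_lca_monoid[OF internal_lca_group]) simp_all

context cut_project
begin

lemma fst_lattice_diff: "x \<in> fst ` L \<Longrightarrow> y \<in> fst ` L \<Longrightarrow> x - y \<in> fst ` L"
  using add_mem neg_mem by (force simp: image_iff)

lemma lattice_int_multiple:
  assumes l: "l \<in> L"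
  shows "(int_multiple j (fst l), snd l [^]\<^bsub>lca_monoid H\<^esub> j) \<in> L"
proof -
  have C: "snd l \<in> topspace (lca_top H)"
    using l lattice_subset by auto
  show ?thesis
  proof (induction j rule: int_induct[where k = 0])
    case base
    then show ?case
      using zero_mem by simp
  next
    case (step1 j)
    then show ?case
      using add_mem[OF step1(2) l] C by (simp add: univ_add.int_pow_mult internal.int_pow_mult)
  next
    case (step2 j)
    have "snd l [^]\<^bsub>lca_monoid H\<^esub> (j - 1) = lca_add H (snd l [^]\<^bsub>lca_monoid H\<^esub> j) (lca_neg H (snd l))"
      using C internal.int_pow_diff[of "snd l" j 1] by (simp add: inv_lca_monoid[OF internal_lca_group])
    then show ?case
      using add_mem[OF step2(2) neg_mem[OF l]] by (simp add: univ_add.int_pow_diff)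
  qed
qed

end

section \<open>Changing the type of the internal group\<close>

definition lca_image :: "('a \<Rightarrow> 'b) \<Rightarrow> 'a lca_data \<Rightarrow> 'b lca_data" where
  "lca_image e H =
     \<lparr>lca_top = pullback_topology (e ` topspace (lca_top H)) (inv_into (topspace (lca_top H)) e) (lca_top H),
      lca_add = \<lambda>a b. e (lca_add H (inv_into (topspace (lca_top H)) e a) (inv_into (topspace (lca_top H)) e b)),
      lca_zero = e (lca_zero H),
      lca_neg = \<lambda>a. e (lca_neg H (inv_into (topspace (lca_top H)) e a))\<rparr>"

lemma
  fixes e :: "'a \<Rightarrow> 'b"
  assumes "inj_on e (topspace (lca_top H))"
  defines "C \<equiv> topspace (lca_top H)" and "d \<equiv> inv_into (topspace (lca_top H)) e"
  shows topspace_lca_image: "topspace (lca_top (lca_image e H)) = e ` C"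
    and homeomorphic_maps_lca_image: "homeomorphic_maps (lca_top H) (lca_top (lca_image e H)) e d"
proof -
  have de: "d (e c) = c" if "c \<in> C" for c
    using assms that by simp
  have T': "lca_top (lca_image e H) = pullback_topology (e ` C) d (lca_top H)"
    by (simp add: lca_image_def C_def d_def)
  show top: "topspace (lca_top (lca_image e H)) = e ` C"
    using de by (auto simp: T' topspace_pullback_topology C_def)
  have "continuous_map (lca_top H) (lca_top H) (d \<circ> e)"
    by (rule continuous_map_eq[of _ _ id]) (auto simp: de C_def)
  then have "continuous_map (lca_top H) (lca_top (lca_image e H)) e"
    unfolding T' by (rule continuous_map_pullback') (auto simp: C_def)
  moreover have "continuous_map (lca_top (lca_image e H)) (lca_top H) d"
    using continuous_map_pullback[of "lca_top H" "lca_top H" id "e ` C" d] by (simp add: T')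
  ultimately show "homeomorphic_maps (lca_top H) (lca_top (lca_image e H)) e d"
    using de top by (auto simp: homeomorphic_maps_def C_def)
qed

lemma lca_group_image:
  assumes H: "lca_group H" and e: "inj_on e (topspace (lca_top H))"
  shows "lca_group (lca_image e H)"
proof -
  define C d where "C = topspace (lca_top H)" and "d = inv_into C e"
  let ?T = "lca_top H" and ?T' = "lca_top (lca_image e H)"
  have de: "\<And>c. c \<in> C \<Longrightarrow> d (e c) = c"
    using e by (simp add: C_def d_def)
  have ops: "lca_add (lca_image e H) = (\<lambda>a b. e (lca_add H (d a) (d b)))"
    "lca_zero (lca_image e H) = e (lca_zero H)" "lca_neg (lca_image e H) = (\<lambda>a. e (lca_neg H (d a)))"
    by (simp_all add: lca_image_def C_def d_def)
  have hm: "homeomorphic_maps ?T ?T' e d"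
    using homeomorphic_maps_lca_image[OF e] by (simp add: C_def d_def)
  then have ce: "continuous_map ?T ?T' e" and cd: "continuous_map ?T' ?T d"
    by (auto simp: homeomorphic_maps_def)
  have "continuous_map (prod_topology ?T' ?T') (prod_topology ?T ?T) (\<lambda>(a, b). (d a, d b))"
    using cd by (simp add: continuous_map_prod_top)
  then have "continuous_map (prod_topology ?T' ?T') ?T'
      (e \<circ> (\<lambda>(a, b). lca_add H a b) \<circ> (\<lambda>(a, b). (d a, d b)))"
    using lca_groupD(8)[OF H] ce by (meson continuous_map_compose)
  then have add: "continuous_map (prod_topology ?T' ?T') ?T' (\<lambda>(a, b). e (lca_add H (d a) (d b)))"
    by (simp add: o_def case_prod_unfold)
  have neg: "continuous_map ?T' ?T' (\<lambda>a. e (lca_neg H (d a)))"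
    using continuous_map_compose[OF continuous_map_compose[OF cd lca_groupD(9)[OF H]] ce]
    by (simp add: o_def)
  have "Hausdorff_space ?T'" "locally_compact_space ?T'"
    using lca_groupD(10,11)[OF H] homeomorphic_maps_imp_homeomorphic_space[OF hm]
      homeomorphic_Hausdorff_space homeomorphic_locally_compact_space by blast+
  with add neg show ?thesis
    unfolding lca_group_def Let_def ops topspace_lca_image[OF e] C_def[symmetric]
    using lca_groupD(1-7)[OF H] by (auto simp: de C_def)
qed

lemma image_pair_combinations:
  assumes "\<And>k l. k \<in> K \<Longrightarrow> l \<in> L \<Longrightarrow> f (h k) (h l) = h (g k l)"
  shows "{f k l | k l. k \<in> h ` K \<and> l \<in> h ` L} = h ` {g k l | k l. k \<in> K \<and> l \<in> L}"
  using assms by force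

lemma
  fixes e :: "'a \<Rightarrow> 'b"
  assumes "inj_on e (topspace (lca_top H))" "a \<in> topspace (lca_top H)" "b \<in> topspace (lca_top H)"
  shows lca_add_image: "lca_add (lca_image e H) (e a) (e b) = e (lca_add H a b)"
    and lca_neg_image: "lca_neg (lca_image e H) (e a) = e (lca_neg H a)"
  using assms by (simp_all add: lca_image_def)

lemma homeomorphic_map_apsnd_lca_image:
  assumes "inj_on e (topspace (lca_top H))"
  shows "homeomorphic_map (prod_topology X (lca_top H)) (prod_topology X (lca_top (lca_image e H))) (apsnd e)"
proof -
  have "homeomorphic_maps (prod_topology X (lca_top H)) (prod_topology X (lca_top (lca_image e H)))
      (\<lambda>(x, y). (id x, e y)) (\<lambda>(x, y). (id x, inv_into (topspace (lca_top H)) e y))"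
    using homeomorphic_maps_lca_image[OF assms] homeomorphic_maps_id[of X X]
    by (simp add: homeomorphic_maps_prod id_def)
  then show ?thesis
    by (auto dest: homeomorphic_maps_imp_map simp: apsnd_def map_prod_def)
qed

context cut_project
begin

lemma apsnd_image_discrete:
  assumes e: "inj_on e (topspace (lca_top H))" and a: "a \<in> apsnd e ` L"
  shows "\<exists>U. openin (prod_topology (euclidean :: 'g topology) (lca_top (lca_image e H))) U
    \<and> U \<inter> apsnd e ` L = {a}"
proof -
  obtain l where l: "l \<in> L" "a = apsnd e l"
    using a by blast
  obtain U where U: "openin (prod_topology euclidean (lca_top H)) U" "U \<inter> L = {l}"
    using discrete[OF l(1)] by blast
  have inj: "inj_on (apsnd e) (UNIV \<times> topspace (lca_top H))"
    using e by (auto simp: inj_on_def)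
  have U_sub: "U \<subseteq> UNIV \<times> topspace (lca_top H)"
    using openin_subset[OF U(1)] by simp
  have "apsnd e ` U \<inter> apsnd e ` L = {a}"
    using inj_on_image_Int[OF inj U_sub lattice_subset, symmetric] U(2) l(2) by simp
  moreover have "openin (prod_topology euclidean (lca_top (lca_image e H))) (apsnd e ` U)"
    using homeomorphic_map_openness[OF homeomorphic_map_apsnd_lca_image[OF e]] openin_subset[OF U(1)] U(1)
    by blast
  ultimately show ?thesis
    by blast
qed

lemma apsnd_image_cocompact:
  assumes e: "inj_on e (topspace (lca_top H))"
  shows "\<exists>K. compactin (prod_topology (euclidean :: 'g topology) (lca_top (lca_image e H))) K \<and>
    {(fst k + fst l, lca_add (lca_image e H) (snd k) (snd l)) | k l. k \<in> K \<and> l \<in> apsnd e ` L}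
      = UNIV \<times> topspace (lca_top (lca_image e H))"
proof -
  let ?C = "topspace (lca_top H)"
  obtain K where K: "compactin (prod_topology euclidean (lca_top H)) K"
    "{(fst k + fst l, lca_add H (snd k) (snd l)) | k l. k \<in> K \<and> l \<in> L} = UNIV \<times> ?C"
    using cocompact by blast
  have KC: "K \<subseteq> UNIV \<times> ?C"
    using compactin_subset_topspace[OF K(1)] by simp
  have "{(fst k + fst l, lca_add (lca_image e H) (snd k) (snd l)) | k l. k \<in> apsnd e ` K \<and> l \<in> apsnd e ` L}
      = apsnd e ` {(fst k + fst l, lca_add H (snd k) (snd l)) | k l. k \<in> K \<and> l \<in> L}"
  proof (rule image_pair_combinations)
    fix k l assume "k \<in> K" "l \<in> L"
    then have "snd k \<in> ?C" "snd l \<in> ?C"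
      using KC lattice_subset by auto
    then show "(fst (apsnd e k) + fst (apsnd e l), lca_add (lca_image e H) (snd (apsnd e k)) (snd (apsnd e l)))
        = apsnd e (fst k + fst l, lca_add H (snd k) (snd l))"
      by (simp add: lca_add_image[OF e])
  qed
  also have "\<dots> = UNIV \<times> topspace (lca_top (lca_image e H))"
    unfolding K(2) by (force simp: topspace_lca_image[OF e])
  finally have sums: "{(fst k + fst l, lca_add (lca_image e H) (snd k) (snd l)) | k l.
      k \<in> apsnd e ` K \<and> l \<in> apsnd e ` L} = UNIV \<times> topspace (lca_top (lca_image e H))" .
  have "compactin (prod_topology euclidean (lca_top (lca_image e H))) (apsnd e ` K)"
    using homeomorphic_map_compactness[OF homeomorphic_map_apsnd_lca_image[OF e]]
      compactin_subset_topspace[OF K(1)] K(1) by blast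
  then show ?thesis
    using sums by (intro exI[of _ "apsnd e ` K"] conjI)
qed

lemma cps_apsnd_image:
  assumes e: "inj_on e (topspace (lca_top H))"
  shows "cps (lca_image e H) (apsnd e ` L)"
  unfolding cps_def Let_def
proof (intro conjI ballI)
  show "lca_group (lca_image e H)"
    using lca_group_image[OF internal_lca_group e] .
  show "apsnd e ` L \<subseteq> UNIV \<times> topspace (lca_top (lca_image e H))"
    using lattice_subset by (auto simp: topspace_lca_image[OF e])
  show "(0, lca_zero (lca_image e H)) \<in> apsnd e ` L"
    using zero_mem by (force simp: lca_image_def)
  fix a b assume "a \<in> apsnd e ` L" "b \<in> apsnd e ` L"
  then obtain a' b' where ab: "a' \<in> L" "b' \<in> L" "a = apsnd e a'" "b = apsnd e b'"
    by blast
  then have "snd a' \<in> topspace (lca_top H)" "snd b' \<in> topspace (lca_top H)"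
    using lattice_subset by auto
  then have eq: "(fst a + fst b, lca_add (lca_image e H) (snd a) (snd b))
      = apsnd e (fst a' + fst b', lca_add H (snd a') (snd b'))"
    by (simp add: ab(3,4) lca_add_image[OF e])
  show "(fst a + fst b, lca_add (lca_image e H) (snd a) (snd b)) \<in> apsnd e ` L"
    unfolding eq using add_mem[OF ab(1,2)] by (rule imageI)
next
  fix a assume "a \<in> apsnd e ` L"
  then obtain a' where a: "a' \<in> L" "a = apsnd e a'"
    by blast
  then have "snd a' \<in> topspace (lca_top H)"
    using lattice_subset by auto
  then have eq: "(- fst a, lca_neg (lca_image e H) (snd a)) = apsnd e (- fst a', lca_neg H (snd a'))"
    by (simp add: a(2) lca_neg_image[OF e])
  show "(- fst a, lca_neg (lca_image e H) (snd a)) \<in> apsnd e ` L"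
    unfolding eq using neg_mem[OF a(1)] by (rule imageI)
next
  show "inj_on fst (apsnd e ` L)"
    using inj_fst by (intro inj_on_imageI) (simp add: o_def)
  have "snd ` L \<subseteq> topspace (lca_top H)"
    using lattice_subset by auto
  then have "(lca_top (lca_image e H)) closure_of (e ` snd ` L) = e ` (lca_top H closure_of snd ` L)"
    by (rule homeomorphic_map_closure_of[OF homeomorphic_maps_imp_map[OF homeomorphic_maps_lca_image[OF e]]])
  then show "(lca_top (lca_image e H)) closure_of snd ` apsnd e ` L = topspace (lca_top (lca_image e H))"
    by (simp add: image_image dense topspace_lca_image[OF e])
qed (use apsnd_image_discrete[OF e] apsnd_image_cocompact[OF e] in auto)

end

lemma subset_of_model_set_inj_image:
  fixes H :: "'a lca_data" and e :: "'a \<Rightarrow> 'b"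
  assumes cps: "cps H L" and W: "window H W" and \<Lambda>: "\<Lambda> \<subseteq> model_set L W"
    and e: "inj_on e (topspace (lca_top H))"
  shows "subset_of_model_set TYPE('b) \<Lambda>"
proof -
  interpret cut_project H L
    by unfold_locales (fact cps)
  have "window (lca_image e H) (e ` W)"
    using homeomorphic_maps_imp_map[OF homeomorphic_maps_lca_image[OF e]] W
    by (rule window_homeomorphic_image)
  moreover have "inj_on fst (apsnd e ` L)"
    using inj_fst by (intro inj_on_imageI) (simp add: o_def)
  then have "\<Lambda> \<subseteq> model_set (apsnd e ` L) (e ` W)"
    using \<Lambda> by (force simp: model_set_eq[OF inj_fst] model_set_eq)
  ultimately show ?thesis
    using cps_apsnd_image[OF e] by (auto simp: subset_of_model_set_iff)
qed

lemma (in cut_project) inj_on_neighbourhood_model_sets: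
  "inj_on (\<lambda>h. {model_set L V | V. openin (lca_top H) V \<and> h \<in> V}) (topspace (lca_top H))"
  unfolding model_set_eq[OF inj_fst]
proof (rule inj_onI, rule ccontr)
  let ?T = "lca_top H"
  fix h h'
  assume h: "h \<in> topspace ?T" "h' \<in> topspace ?T" "h \<noteq> h'"
    and eq: "{fst ` (L \<inter> UNIV \<times> V) | V. openin ?T V \<and> h \<in> V}
      = {fst ` (L \<inter> UNIV \<times> V) | V. openin ?T V \<and> h' \<in> V}"
  obtain V V' where V: "openin ?T V" "openin ?T V'" "h \<in> V" "h' \<in> V'" "disjnt V V'"
    using lca_groupD(10)[OF internal_lca_group] h unfolding Hausdorff_space_def by blast
  then have "fst ` (L \<inter> UNIV \<times> V) \<in> {fst ` (L \<inter> UNIV \<times> V) | V. openin ?T V \<and> h' \<in> V}"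
    unfolding eq[symmetric] by blast
  then obtain V2 where V2: "openin ?T V2" "h' \<in> V2" "fst ` (L \<inter> UNIV \<times> V) = fst ` (L \<inter> UNIV \<times> V2)"
    by blast
  have "(V2 \<inter> V') \<inter> ?T closure_of (snd ` L) \<noteq> {}"
    using dense V V2 h by auto
  then have "(V2 \<inter> V') \<inter> snd ` L \<noteq> {}"
    using openin_Int_closure_of_eq_empty[of ?T "V2 \<inter> V'"] V(2) V2(1) by blast
  then obtain l where l: "l \<in> L" "snd l \<in> V2" "snd l \<in> V'"
    by auto
  then have "fst l \<in> fst ` (L \<inter> UNIV \<times> V)"
    using V2(3) by (metis IntI SigmaI UNIV_I image_eqI prod.collapse)
  then obtain l' where "l' \<in> L" "snd l' \<in> V" "fst l' = fst l"
    by auto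
  then show False
    using l V(5) inj_onD[OF inj_fst, of l l'] by (auto simp: disjnt_def)
qed

lemma inj_indicator: "inj (indicator :: 'a set \<Rightarrow> 'a \<Rightarrow> real)"
proof (rule injI)
  fix A B :: "'a set"
  assume "indicator A = (indicator B :: 'a \<Rightarrow> real)"
  then have "indicator A x = (indicator B x :: real)" for x
    by simp
  then show "A = B"
    by (auto simp: indicator_def of_bool_eq_iff)
qed

lemma subset_of_model_set_real_fun_sets:
  fixes \<Lambda> :: "'g::{topological_ab_group_add,t2_space} set"
  assumes "subset_of_model_set TYPE('a) \<Lambda>"
  shows "subset_of_model_set TYPE(('g \<Rightarrow> real) set) \<Lambda>"
proof -
  obtain H :: "'a lca_data" and L :: "('g \<times> 'a) set" and W where
    H: "cps H L" "window H W" "\<Lambda> \<subseteq> model_set L W"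
    using assms by (auto simp: subset_of_model_set_iff)
  interpret cut_project H L by unfold_locales (fact H(1))
  let ?N = "\<lambda>h. {model_set L V | V. openin (lca_top H) V \<and> h \<in> V}"
  have "inj_on (image (indicator :: 'g set \<Rightarrow> 'g \<Rightarrow> real) \<circ> ?N) (topspace (lca_top H))"
    using inj_on_neighbourhood_model_sets
      inj_on_image[OF inj_on_subset[OF inj_indicator subset_UNIV]]
    by (rule comp_inj_on)
  then show ?thesis
    by (rule subset_of_model_set_inj_image[OF H])
qed

section \<open>Cyclic extensions\<close>

lemma continuous_map_prod_discrete_topology:
  assumes "\<And>v. v \<in> S \<Longrightarrow> continuous_map X Y (\<lambda>u. f (u, v))"
  shows "continuous_map (prod_topology X (discrete_topology S)) Y f"
  unfolding continuous_map_def
proof (intro conjI allI impI)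
  show "f \<in> topspace (prod_topology X (discrete_topology S)) \<rightarrow> topspace Y"
    using assms by (auto simp: continuous_map_def Pi_iff)
  fix U assume U: "openin Y U"
  have "{x \<in> topspace (prod_topology X (discrete_topology S)). f x \<in> U}
      = (\<Union>v\<in>S. {u \<in> topspace X. f (u, v) \<in> U} \<times> {v})"
    by auto
  moreover have "openin (prod_topology X (discrete_topology S)) ({u \<in> topspace X. f (u, v) \<in> U} \<times> {v})"
    if "v \<in> S" for v
    using openin_continuous_map_preimage[OF assms[OF that] U] that
    by (auto simp: openin_prod_Times_iff)
  ultimately show "openin (prod_topology X (discrete_topology S)) {x \<in> topspace (prod_topology X (discrete_topology S)). f x \<in> U}"
    by auto
qed

text \<open>The quotient of \<open>H \<times> \<int>\<close> by the subgroup generated by \<open>(s, -q)\<close>, represented by the pairs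
  whose second component is a residue modulo \<open>q\<close>; \<open>cyclic_reduce\<close> is the quotient map. For
  \<open>q = 0\<close> this is \<open>H \<times> \<int>\<close>.\<close>

definition cyclic_reduce :: "'u lca_data \<Rightarrow> 'u \<Rightarrow> int \<Rightarrow> 'u \<times> int \<Rightarrow> 'u \<times> int" where
  "cyclic_reduce H s q x = (lca_add H (fst x) (s [^]\<^bsub>lca_monoid H\<^esub> (snd x div q)), snd x mod q)"

definition cyclic_extension :: "'u lca_data \<Rightarrow> 'u \<Rightarrow> int \<Rightarrow> ('u \<times> int) lca_data" where
  "cyclic_extension H s q =
     \<lparr>lca_top = prod_topology (lca_top H) (discrete_topology {a. a mod q = a}),
      lca_add = \<lambda>x y. cyclic_reduce H s q (lca_add H (fst x) (fst y), snd x + snd y),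
      lca_zero = (lca_zero H, 0),
      lca_neg = \<lambda>x. cyclic_reduce H s q (lca_neg H (fst x), - snd x)\<rparr>"

context
  fixes H :: "'u lca_data" and s :: 'u and q :: int
  assumes H: "lca_group H" and s: "s \<in> topspace (lca_top H)"
begin

interpretation internal: comm_group "lca_monoid H"
  rewrites "carrier (lca_monoid H) = topspace (lca_top H)" and "mult (lca_monoid H) = lca_add H"
    and "one (lca_monoid H) = lca_zero H"
  by (rule comm_group_lca_monoid[OF H]) simp_all

lemma cyclic_reduce_mem:
  "h \<in> topspace (lca_top H) \<Longrightarrow> cyclic_reduce H s q (h, a) \<in> topspace (lca_top H) \<times> {a. a mod q = a}"
  using s by (simp add: cyclic_reduce_def)

lemma cyclic_reduce_residue:
  "h \<in> topspace (lca_top H) \<Longrightarrow> a mod q = a \<Longrightarrow> cyclic_reduce H s q (h, a) = (h, a)"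
  by (simp add: cyclic_reduce_def mod_eq_self_iff_div_eq_0)

lemma cyclic_reduce_absorb:
  assumes h: "h \<in> topspace (lca_top H)" and h': "h' \<in> topspace (lca_top H)"
  shows "cyclic_reduce H s q (lca_add H (fst (cyclic_reduce H s q (h, a))) h', snd (cyclic_reduce H s q (h, a)) + b)
    = cyclic_reduce H s q (lca_add H h h', a + b)"
proof -
  let ?s = "\<lambda>k. s [^]\<^bsub>lca_monoid H\<^esub> (k :: int)"
  have "?s ((a + b) div q) = lca_add H (?s (a div q)) (?s ((a mod q + b) div q))"
    using s by (subst div_add_split) (rule internal.int_pow_mult)
  moreover have "lca_add H (lca_add H h (?s (a div q))) h' = lca_add H (lca_add H h h') (?s (a div q))"
    using h h' s by (simp add: internal.m_assoc internal.m_comm[of "?s (a div q)" h'])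
  ultimately have "lca_add H (lca_add H (lca_add H h (?s (a div q))) h') (?s ((a mod q + b) div q))
      = lca_add H (lca_add H h h') (?s ((a + b) div q))"
    using h h' s by (simp add: internal.m_assoc)
  then show ?thesis
    by (simp add: cyclic_reduce_def mod_add_left_eq)
qed

lemma continuous_map_cyclic_reduce:
  "continuous_map (lca_top H) (prod_topology (lca_top H) (discrete_topology {a. a mod q = a}))
    (\<lambda>h. cyclic_reduce H s q (h, a))"
  using homeomorphic_imp_continuous_map[OF homeomorphic_map_lca_translation[OF H internal.int_pow_closed[OF s]]]
  by (auto simp: cyclic_reduce_def intro!: continuous_map_pairedI)

lemma cyclic_reduce_assoc:
  fixes x y z :: "'u \<times> int"
  assumes C: "fst x \<in> topspace (lca_top H)" "fst y \<in> topspace (lca_top H)" "fst z \<in> topspace (lca_top H)"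
  defines "xy \<equiv> cyclic_reduce H s q (lca_add H (fst x) (fst y), snd x + snd y)"
    and "yz \<equiv> cyclic_reduce H s q (lca_add H (fst y) (fst z), snd y + snd z)"
  shows "cyclic_reduce H s q (lca_add H (fst xy) (fst z), snd xy + snd z)
    = cyclic_reduce H s q (lca_add H (fst x) (fst yz), snd x + snd yz)"
proof -
  let ?red = "cyclic_reduce H s q"
  have yz: "fst yz \<in> topspace (lca_top H)"
    using C cyclic_reduce_mem[of "lca_add H (fst y) (fst z)" "snd y + snd z"] by (auto simp: yz_def)
  have "?red (lca_add H (fst xy) (fst z), snd xy + snd z)
      = ?red (lca_add H (lca_add H (fst x) (fst y)) (fst z), snd x + snd y + snd z)"
    using C cyclic_reduce_absorb by (simp add: xy_def)
  also have "\<dots> = ?red (lca_add H (lca_add H (fst y) (fst z)) (fst x), snd y + snd z + snd x)"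
    using C by (simp add: internal.m_ac ac_simps)
  also have "\<dots> = ?red (lca_add H (fst yz) (fst x), snd yz + snd x)"
    using C cyclic_reduce_absorb by (simp add: yz_def)
  also have "\<dots> = ?red (lca_add H (fst x) (fst yz), snd x + snd yz)"
    by (simp only: internal.m_comm[OF yz C(1)] add.commute[of "snd yz"])
  finally show ?thesis .
qed

lemma continuous_map_cyclic_extension_add:
  defines "E \<equiv> cyclic_extension H s q"
  shows "continuous_map (prod_topology (lca_top E) (lca_top E)) (lca_top E) (\<lambda>(x, y). lca_add E x y)"
proof -
  let ?T = "lca_top H" and ?R = "{a. a mod q = a}"
  let ?E = "prod_topology ?T (discrete_topology ?R)"
  let ?r = "\<lambda>(x :: 'u \<times> int, y :: 'u \<times> int). ((fst x, fst y), (snd x, snd y))"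
  let ?add = "\<lambda>((h, h'), (a, b)). cyclic_reduce H s q (lca_add H h h', a + b)"
  have "continuous_map (prod_topology ?E ?E) (prod_topology (prod_topology ?T ?T) (discrete_topology (?R \<times> ?R))) ?r"
    unfolding case_prod_unfold prod_topology_discrete_topology
    by (intro continuous_map_pairedI
        continuous_map_compose[OF continuous_map_fst continuous_map_fst, unfolded o_def]
        continuous_map_compose[OF continuous_map_snd continuous_map_fst, unfolded o_def]
        continuous_map_compose[OF continuous_map_fst continuous_map_snd, unfolded o_def]
        continuous_map_compose[OF continuous_map_snd continuous_map_snd, unfolded o_def])
  moreover have "continuous_map (prod_topology (prod_topology ?T ?T) (discrete_topology (?R \<times> ?R))) ?E ?add"
  proof (rule continuous_map_prod_discrete_topology)
    fix ab :: "int \<times> int"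
    show "continuous_map (prod_topology ?T ?T) ?E (\<lambda>hh. ?add (hh, ab))"
      using continuous_map_compose[OF lca_groupD(8)[OF H] continuous_map_cyclic_reduce]
      by (simp add: o_def case_prod_unfold)
  qed
  ultimately have "continuous_map (prod_topology ?E ?E) ?E (?add \<circ> ?r)"
    by (rule continuous_map_compose)
  then show ?thesis
    by (simp add: E_def cyclic_extension_def o_def case_prod_unfold)
qed

lemma continuous_map_cyclic_extension_neg:
  defines "E \<equiv> cyclic_extension H s q"
  shows "continuous_map (lca_top E) (lca_top E) (lca_neg E)"
  unfolding E_def cyclic_extension_def lca_data.simps
  by (rule continuous_map_prod_discrete_topology)
    (use continuous_map_compose[OF lca_groupD(9)[OF H] continuous_map_cyclic_reduce] in \<open>simp add: o_def\<close>)

lemma lca_group_cyclic_extension: "lca_group (cyclic_extension H s q)"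
proof -
  let ?T = "lca_top H"
  have top: "topspace (lca_top (cyclic_extension H s q)) = topspace ?T \<times> {a. a mod q = a}"
    by (simp add: cyclic_extension_def)
  have "Hausdorff_space (lca_top (cyclic_extension H s q))"
    "locally_compact_space (lca_top (cyclic_extension H s q))"
    using lca_groupD(10,11)[OF H]
    by (simp_all add: cyclic_extension_def Hausdorff_space_prod_topology
        locally_compact_space_prod_topology locally_compact_space_discrete_topology)
  with continuous_map_cyclic_extension_add continuous_map_cyclic_extension_neg
  show ?thesis
    unfolding lca_group_def Let_def top
  proof (intro conjI ballI)
    show "lca_zero (cyclic_extension H s q) \<in> topspace ?T \<times> {a. a mod q = a}"
      by (simp add: cyclic_extension_def)
    fix x y z assume "x \<in> topspace ?T \<times> {a. a mod q = a}" "y \<in> topspace ?T \<times> {a. a mod q = a}"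
      "z \<in> topspace ?T \<times> {a. a mod q = a}"
    then have C: "fst x \<in> topspace ?T" "fst y \<in> topspace ?T" "fst z \<in> topspace ?T"
      and R: "snd x mod q = snd x"
      by auto
    show "lca_add (cyclic_extension H s q) x y \<in> topspace ?T \<times> {a. a mod q = a}"
      "lca_neg (cyclic_extension H s q) x \<in> topspace ?T \<times> {a. a mod q = a}"
      using cyclic_reduce_mem C lca_groupD(2,3)[OF H] by (simp_all add: cyclic_extension_def)
    show "lca_add (cyclic_extension H s q) x y = lca_add (cyclic_extension H s q) y x"
      using C by (simp add: cyclic_extension_def internal.m_comm add.commute)
    show "lca_add (cyclic_extension H s q) (lca_zero (cyclic_extension H s q)) x = x"
      using C R cyclic_reduce_residue[of "fst x" "snd x"] by (simp add: cyclic_extension_def)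
    show "lca_add (cyclic_extension H s q) (lca_neg (cyclic_extension H s q) x) x = lca_zero (cyclic_extension H s q)"
      using C cyclic_reduce_absorb[of "lca_neg H (fst x)" "fst x" "- snd x" "snd x"]
        lca_groupD(3,7)[OF H] cyclic_reduce_residue[of "lca_zero H" 0]
      by (simp add: cyclic_extension_def)
    show "lca_add (cyclic_extension H s q) (lca_add (cyclic_extension H s q) x y) z
        = lca_add (cyclic_extension H s q) x (lca_add (cyclic_extension H s q) y z)"
      using cyclic_reduce_assoc[OF C] by (simp add: cyclic_extension_def)
  qed
qed
end

lemma window_cyclic_extension_Times:
  assumes "window H W" "r mod q = r"
  shows "window (cyclic_extension H s q) (W \<times> {r})"
proof -
  have "compactin (discrete_topology {a. a mod q = a}) {r}"
    using assms(2) by simp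
  then show ?thesis
    using assms unfolding window_def
    by (auto simp: cyclic_extension_def closure_of_Times discrete_topology_closure_of
        interior_of_Times compactin_Times)
qed

section \<open>Adjoining a translation to the lattice\<close>

locale cut_project_shift = cut_project H L
  for H :: "'u lca_data" and L :: "('g::{topological_ab_group_add,t2_space} \<times> 'u) set" +
  fixes t :: 'g
begin

text \<open>Some generator of the subgroup \<open>{k. k t \<in> \<pi>\<^sub>1(L)}\<close> of \<open>\<int>\<close>.\<close>

definition period :: int where
  "period = (SOME q. {k. int_multiple k t \<in> fst ` L} = {k. q dvd k})"

lemma int_multiple_mem_iff: "int_multiple k t \<in> fst ` L \<longleftrightarrow> period dvd k"
proof -
  have "\<exists>q. {k. int_multiple k t \<in> fst ` L} = {k. q dvd k}"
  proof (rule int_subgroup_eq_multiples)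
    show "0 \<in> {k. int_multiple k t \<in> fst ` L}"
      using zero_mem by force
    show "a - b \<in> {k. int_multiple k t \<in> fst ` L}"
      if "a \<in> {k. int_multiple k t \<in> fst ` L}" "b \<in> {k. int_multiple k t \<in> fst ` L}" for a b
      using fst_lattice_diff that by (simp add: univ_add.int_pow_diff)
  qed blast
  then have "{k. int_multiple k t \<in> fst ` L} = {k. period dvd k}"
    unfolding period_def by (rule someI_ex)
  then show ?thesis
    by blast
qed

definition period_star :: 'u where
  "period_star = star_map L (int_multiple period t)"

lemma period_point_mem: "(int_multiple period t, period_star) \<in> L"
proof -
  obtain l where "l \<in> L" "fst l = int_multiple period t"
    using int_multiple_mem_iff[of period] by auto
  then show ?thesis
    using star_map_eq[OF inj_fst \<open>l \<in> L\<close>] by (metis period_star_def prod.collapse)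
qed

lemma period_star_carrier: "period_star \<in> topspace (lca_top H)"
  using period_point_mem lattice_subset by auto

lemma period_multiple_mem: "(int_multiple (j * period) t, period_star [^]\<^bsub>lca_monoid H\<^esub> j) \<in> L"
  using lattice_int_multiple[OF period_point_mem, of j] by (simp add: univ_add.int_pow_pow mult.commute)

definition extended_internal :: "('u \<times> int) lca_data" where
  "extended_internal = cyclic_extension H period_star period"

text \<open>The lattice \<open>L'\<close> of the introduction, each point written with its normal form in the extension.\<close>

definition extended_lattice :: "('g \<times> 'u \<times> int) set" where
  "extended_lattice = {(fst l + int_multiple k t, (snd l, k)) | l k. l \<in> L \<and> k mod period = k}"

lemma extended_latticeI:
  "l \<in> L \<Longrightarrow> k mod period = k \<Longrightarrow> (fst l + int_multiple k t, (snd l, k)) \<in> extended_lattice"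
  unfolding extended_lattice_def by blast

lemma extended_latticeE:
  assumes "a \<in> extended_lattice"
  obtains l k where "l \<in> L" "k mod period = k" "a = (fst l + int_multiple k t, (snd l, k))"
  using assms unfolding extended_lattice_def by blast

lemma extended_lattice_reduce_mem:
  assumes l: "l \<in> L"
  shows "(fst l + int_multiple k t, cyclic_reduce H period_star period (snd l, k)) \<in> extended_lattice"
proof -
  let ?j = "k div period"
  let ?l = "(fst l + int_multiple (?j * period) t, lca_add H (snd l) (period_star [^]\<^bsub>lca_monoid H\<^esub> ?j))"
  have "?l \<in> L"
    using add_mem[OF l period_multiple_mem] by simp
  moreover have "int_multiple k t = int_multiple (?j * period + k mod period) t"
    by (simp only: div_mult_mod_eq)
  then have "int_multiple k t = int_multiple (?j * period) t + int_multiple (k mod period) t"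
    by (simp only: univ_add.int_pow_mult UNIV_I)
  ultimately show ?thesis
    using extended_latticeI[of ?l "k mod period"] by (simp add: cyclic_reduce_def add.assoc)
qed

lemma extended_lattice_add:
  assumes "a \<in> extended_lattice" "b \<in> extended_lattice"
  shows "(fst a + fst b, lca_add extended_internal (snd a) (snd b)) \<in> extended_lattice"
proof -
  obtain l k l' k' where l: "l \<in> L" "a = (fst l + int_multiple k t, (snd l, k))"
    and l': "l' \<in> L" "b = (fst l' + int_multiple k' t, (snd l', k'))"
    using assms by (metis extended_latticeE)
  have "(fst a + fst b, lca_add extended_internal (snd a) (snd b))
      = (fst (fst l + fst l', lca_add H (snd l) (snd l')) + int_multiple (k + k') t,
         cyclic_reduce H period_star period (snd (fst l + fst l', lca_add H (snd l) (snd l')), k + k'))"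
    using l(2) l'(2) by (simp add: univ_add.int_pow_mult ac_simps extended_internal_def cyclic_extension_def)
  then show ?thesis
    using extended_lattice_reduce_mem[OF add_mem[OF l(1) l'(1)]] by simp
qed

lemma extended_lattice_neg:
  assumes "a \<in> extended_lattice"
  shows "(- fst a, lca_neg extended_internal (snd a)) \<in> extended_lattice"
proof -
  obtain l k where l: "l \<in> L" "a = (fst l + int_multiple k t, (snd l, k))"
    using assms by (metis extended_latticeE)
  have "(- fst a, lca_neg extended_internal (snd a))
      = (fst (- fst l, lca_neg H (snd l)) + int_multiple (- k) t,
         cyclic_reduce H period_star period (snd (- fst l, lca_neg H (snd l)), - k))"
    using l(2) by (simp add: univ_add.int_pow_neg extended_internal_def cyclic_extension_def)
  then show ?thesis
    using extended_lattice_reduce_mem[OF neg_mem[OF l(1)]] by simp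
qed

lemma inj_on_fst_extended_lattice: "inj_on fst extended_lattice"
proof (rule inj_onI)
  fix a b assume ab: "a \<in> extended_lattice" "b \<in> extended_lattice" "fst a = fst b"
  obtain l k l' k' where l: "l \<in> L" "k mod period = k" "a = (fst l + int_multiple k t, (snd l, k))"
    and l': "l' \<in> L" "k' mod period = k'" "b = (fst l' + int_multiple k' t, (snd l', k'))"
    using ab(1,2) by (metis extended_latticeE)
  have "int_multiple (k - k') t = fst l' - fst l"
    using ab(3) l(3) l'(3) by (simp add: univ_add.int_pow_diff algebra_simps)
  also have "\<dots> \<in> fst ` L"
    using fst_lattice_diff l(1) l'(1) by blast
  finally have "k = k'"
    using l(2) l'(2) by (metis int_multiple_mem_iff mod_eq_dvd_iff)
  then have "l = l'"
    using ab(3) l(1,3) l'(1,3) inj_onD[OF inj_fst] by simp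
  then show "a = b"
    using l(3) l'(3) \<open>k = k'\<close> by simp
qed

lemma lca_top_extended_internal:
  "lca_top extended_internal = prod_topology (lca_top H) (discrete_topology {a. a mod period = a})"
  by (simp add: extended_internal_def cyclic_extension_def)

lemma lca_group_extended_internal: "lca_group extended_internal"
  unfolding extended_internal_def
  by (rule lca_group_cyclic_extension[OF internal_lca_group period_star_carrier])

lemma extended_lattice_subset: "extended_lattice \<subseteq> UNIV \<times> topspace (lca_top extended_internal)"
  using lattice_subset by (auto simp: lca_top_extended_internal elim!: extended_latticeE)

lemma extended_lattice_discrete:
  assumes "a \<in> extended_lattice"
  shows "\<exists>U. openin (prod_topology (euclidean :: 'g topology) (lca_top extended_internal)) U
    \<and> U \<inter> extended_lattice = {a}"
proof -
  let ?R = "{a. a mod period = a}"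
  let ?X = "prod_topology (euclidean :: 'g topology) (prod_topology (lca_top H) (discrete_topology ?R))"
  obtain l k where l: "l \<in> L" "k mod period = k" "a = (fst l + int_multiple k t, (snd l, k))"
    using assms by (rule extended_latticeE)
  obtain U where U: "openin (prod_topology euclidean (lca_top H)) U" "U \<inter> L = {l}"
    using discrete[OF l(1)] by blast
  define \<psi> where "\<psi> = (\<lambda>y :: 'g \<times> 'u \<times> int. (fst y - int_multiple k t, fst (snd y)))"
  let ?U = "{y \<in> topspace ?X. \<psi> y \<in> U} \<inter> {y \<in> topspace ?X. snd (snd y) \<in> {k}}"
  have "continuous_map (euclidean :: 'g topology) euclidean (\<lambda>g. g - int_multiple k t)"
    by (simp add: continuous_on_diff)
  then have "continuous_map ?X (prod_topology euclidean (lca_top H)) \<psi>"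
    unfolding \<psi>_def
    by (intro continuous_map_pairedI continuous_map_compose[OF continuous_map_fst, unfolded o_def]
        continuous_map_compose[OF continuous_map_snd continuous_map_fst, unfolded o_def])
  moreover have "continuous_map ?X (discrete_topology ?R) (\<lambda>y. snd (snd y))"
    by (rule continuous_map_compose[OF continuous_map_snd continuous_map_snd, unfolded o_def])
  ultimately have "openin ?X ?U"
    using l(2) by (intro openin_Int openin_continuous_map_preimage[OF _ U(1)]
        openin_continuous_map_preimage) auto
  moreover have "?U \<inter> extended_lattice = {a}"
  proof (intro subset_antisym subsetI)
    fix y assume y: "y \<in> ?U \<inter> extended_lattice"
    then obtain l' k' where l': "l' \<in> L" "y = (fst l' + int_multiple k' t, (snd l', k'))"
      by (blast elim: extended_latticeE)
    then have "l' \<in> U \<inter> L" "k' = k"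
      using y by (auto simp: \<psi>_def)
    then show "y \<in> {a}"
      using U(2) l(3) l'(2) by auto
  next
    fix y assume "y \<in> {a}"
    then show "y \<in> ?U \<inter> extended_lattice"
      using U l assms lattice_subset by (auto simp: \<psi>_def)
  qed
  ultimately show ?thesis
    unfolding lca_top_extended_internal by blast
qed

lemma extended_lattice_sums_cover:
  assumes K: "{(fst k + fst l, lca_add H (snd k) (snd l)) | k l. k \<in> K \<and> l \<in> L} = UNIV \<times> topspace (lca_top H)"
  shows "UNIV \<times> topspace (lca_top extended_internal) \<subseteq>
    {(fst k + fst l, lca_add extended_internal (snd k) (snd l)) | k l.
      k \<in> (\<lambda>y. (fst y, (snd y, 0))) ` K \<and> l \<in> extended_lattice}"
proof
  fix x :: "'g \<times> 'u \<times> int" assume "x \<in> UNIV \<times> topspace (lca_top extended_internal)"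
  then obtain g h r where x: "x = (g, (h, r))" "h \<in> topspace (lca_top H)" "r mod period = r"
    by (auto simp: lca_top_extended_internal)
  then have "(g - int_multiple r t, h) \<in> {(fst k + fst l, lca_add H (snd k) (snd l)) | k l. k \<in> K \<and> l \<in> L}"
    unfolding K by simp
  then obtain k l where kl: "k \<in> K" "l \<in> L"
    "g - int_multiple r t = fst k + fst l" "h = lca_add H (snd k) (snd l)"
    by blast
  let ?k = "(fst k, (snd k, 0 :: int))" and ?l = "(fst l + int_multiple r t, (snd l, r))"
  have "fst ?k + fst ?l = g"
    using kl(3) by (simp add: algebra_simps)
  moreover have "lca_add extended_internal (snd ?k) (snd ?l) = (h, r)"
    using cyclic_reduce_residue[OF internal_lca_group period_star_carrier x(2,3)] kl(4)
    by (simp add: extended_internal_def cyclic_extension_def)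
  ultimately have "x = (fst ?k + fst ?l, lca_add extended_internal (snd ?k) (snd ?l))"
    by (simp only: x(1))
  moreover have "?l \<in> extended_lattice"
    using kl(2) x(3) by (rule extended_latticeI)
  ultimately show "x \<in> {(fst k + fst l, lca_add extended_internal (snd k) (snd l)) | k l.
      k \<in> (\<lambda>y. (fst y, (snd y, 0))) ` K \<and> l \<in> extended_lattice}"
    using kl(1) by blast
qed

lemma extended_lattice_cocompact:
  "\<exists>K. compactin (prod_topology (euclidean :: 'g topology) (lca_top extended_internal)) K \<and>
    {(fst k + fst l, lca_add extended_internal (snd k) (snd l)) | k l. k \<in> K \<and> l \<in> extended_lattice}
      = UNIV \<times> topspace (lca_top extended_internal)"
proof -
  let ?E = "lca_top extended_internal"
  obtain K where K: "compactin (prod_topology euclidean (lca_top H)) K"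
    "{(fst k + fst l, lca_add H (snd k) (snd l)) | k l. k \<in> K \<and> l \<in> L} = UNIV \<times> topspace (lca_top H)"
    using cocompact by blast
  define \<iota> where "\<iota> = (\<lambda>y :: 'g \<times> 'u. (fst y, (snd y, 0 :: int)))"
  have "continuous_map (prod_topology euclidean (lca_top H)) (prod_topology euclidean ?E) \<iota>"
    unfolding \<iota>_def lca_top_extended_internal
    by (intro continuous_map_pairedI continuous_map_fst continuous_map_snd) auto
  then have compact: "compactin (prod_topology euclidean ?E) (\<iota> ` K)"
    by (rule image_compactin[OF K(1)])
  have "{(fst k + fst l, lca_add extended_internal (snd k) (snd l)) | k l. k \<in> \<iota> ` K \<and> l \<in> extended_lattice}
      \<subseteq> UNIV \<times> topspace ?E"
  proof
    fix x assume "x \<in> {(fst k + fst l, lca_add extended_internal (snd k) (snd l)) | k l.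
        k \<in> \<iota> ` K \<and> l \<in> extended_lattice}"
    then obtain k l where x: "x = (fst k + fst l, lca_add extended_internal (snd k) (snd l))"
      and kl: "k \<in> \<iota> ` K" "l \<in> extended_lattice"
      by blast
    have "snd k \<in> topspace ?E"
      using kl(1) compactin_subset_topspace[OF compact] by auto
    moreover have "snd l \<in> topspace ?E"
      using kl(2) extended_lattice_subset by auto
    ultimately show "x \<in> UNIV \<times> topspace ?E"
      using lca_groupD(2)[OF lca_group_extended_internal] by (simp add: x)
  qed
  then have "{(fst k + fst l, lca_add extended_internal (snd k) (snd l)) | k l. k \<in> \<iota> ` K \<and> l \<in> extended_lattice}
      = UNIV \<times> topspace ?E"
    using extended_lattice_sums_cover[OF K(2)] unfolding \<iota>_def by (rule subset_antisym)
  with compact show ?thesis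
    by (intro exI[of _ "\<iota> ` K"] conjI)
qed

lemma extended_lattice_dense:
  "lca_top extended_internal closure_of (snd ` extended_lattice) = topspace (lca_top extended_internal)"
proof -
  have "snd ` extended_lattice = snd ` L \<times> {a. a mod period = a}"
    by (force simp: extended_lattice_def)
  then show ?thesis
    using dense by (simp add: lca_top_extended_internal closure_of_Times discrete_topology_closure_of)
qed

lemma cps_extended: "cps extended_internal extended_lattice"
  unfolding cps_def Let_def
proof (intro conjI ballI)
  show "lca_group extended_internal"
    by (rule lca_group_extended_internal)
  show "(0, lca_zero extended_internal) \<in> extended_lattice"
    using extended_latticeI[OF zero_mem, of 0] by (simp add: extended_internal_def cyclic_extension_def)
qed (use extended_lattice_subset extended_lattice_add extended_lattice_neg extended_lattice_discrete
       extended_lattice_cocompact inj_on_fst_extended_lattice extended_lattice_dense in auto)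

end

lemma (in cut_project_shift) union_translate_subset_of_model_set:
  assumes W: "window H W" and \<Lambda>: "\<Lambda> \<subseteq> model_set L W"
  shows "subset_of_model_set TYPE('u \<times> int) (\<Lambda> \<union> (\<lambda>x. x + t) ` \<Lambda>)"
proof -
  define \<sigma> where "\<sigma> = period_star [^]\<^bsub>lca_monoid H\<^esub> (1 div period)"
  define W' where "W' = W \<times> {0} \<union> (\<lambda>h. lca_add H h \<sigma>) ` W \<times> {1 mod period}"
  have \<sigma>: "\<sigma> \<in> topspace (lca_top H)"
    using period_star_carrier by (simp add: \<sigma>_def)
  have "window extended_internal W'"
    unfolding W'_def extended_internal_def
    by (intro window_Un window_cyclic_extension_Times W
        window_homeomorphic_image[OF homeomorphic_map_lca_translation[OF internal_lca_group \<sigma>]]) simp_all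
  moreover have "\<Lambda> \<union> (\<lambda>x. x + t) ` \<Lambda> \<subseteq> model_set extended_lattice W'"
  proof
    fix y assume "y \<in> \<Lambda> \<union> (\<lambda>x. x + t) ` \<Lambda>"
    then obtain x where x: "x \<in> \<Lambda>" "y = x + int_multiple 0 t \<or> y = x + int_multiple 1 t"
      by auto
    then obtain l where l: "l \<in> L" "fst l = x" "snd l \<in> W"
      using \<Lambda> by (auto simp: model_set_eq[OF inj_fst])
    have "snd l \<in> topspace (lca_top H)"
      using l(1) lattice_subset by auto
    then have "cyclic_reduce H period_star period (snd l, 0) \<in> W'"
      using l(3) cyclic_reduce_residue[OF internal_lca_group period_star_carrier] by (simp add: W'_def)
    moreover have "cyclic_reduce H period_star period (snd l, 1) \<in> W'"
      using l(3) by (auto simp: W'_def cyclic_reduce_def \<sigma>_def)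
    ultimately have mem: "(fst l + int_multiple k t, cyclic_reduce H period_star period (snd l, k))
        \<in> extended_lattice \<inter> UNIV \<times> W'" if "k = 0 \<or> k = 1" for k
      using that extended_lattice_reduce_mem[OF l(1), of k] by auto
    have "fst l + int_multiple k t \<in> model_set extended_lattice W'" if "k = 0 \<or> k = 1" for k
      unfolding model_set_eq[OF inj_on_fst_extended_lattice] using mem[OF that] by (rule image_eqI[rotated]) simp
    then show "y \<in> model_set extended_lattice W'"
      using x(2) l(2) by blast
  qed
  ultimately show ?thesis
    using cps_extended by (auto simp: subset_of_model_set_iff)
qed

lemma subset_of_model_set_union_translate:
  fixes \<Lambda> :: "'g::{topological_ab_group_add,t2_space} set"
  assumes "subset_of_model_set TYPE('u) \<Lambda>"
  shows "subset_of_model_set TYPE('u \<times> int) (\<Lambda> \<union> (\<lambda>x. x + t) ` \<Lambda>)"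
proof -
  obtain H :: "'u lca_data" and L W where "cps H L" "window H W" "\<Lambda> \<subseteq> model_set L W"
    using assms by (auto simp: subset_of_model_set_iff)
  then show ?thesis
    using cut_project_shift.union_translate_subset_of_model_set[of H L W \<Lambda> t]
    by (simp add: cut_project_shift_def cut_project_def)
qed

section \<open>Finite sets of translations\<close>

lemma subset_of_model_set_plus_finite:
  fixes F :: "'g::{topological_ab_group_add,t2_space} set"
  assumes "finite F" "F \<noteq> {}" "subset_of_model_set TYPE(('g \<Rightarrow> real) set) \<Lambda>"
  shows "subset_of_model_set TYPE(('g \<Rightarrow> real) set) {x + f | x f. x \<in> \<Lambda> \<and> f \<in> F}"
  using assms
proof (induction F arbitrary: \<Lambda> rule: finite_ne_induct)
  case (singleton t)
  have "subset_of_model_set TYPE(('g \<Rightarrow> real) set) (\<Lambda> \<union> (\<lambda>x. x + t) ` \<Lambda>)"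
    using subset_of_model_set_union_translate[OF singleton] by (rule subset_of_model_set_real_fun_sets)
  then show ?case
    by (rule subset_of_model_set_mono) auto
next
  case (insert t F)
  define \<Lambda>' where "\<Lambda>' = {x + f | x f. x \<in> \<Lambda> \<and> f \<in> F}"
  obtain f0 where f0: "f0 \<in> F"
    using insert.hyps(2) by blast
  have "subset_of_model_set TYPE(('g \<Rightarrow> real) set) (\<Lambda>' \<union> (\<lambda>y. y + (t - f0)) ` \<Lambda>')"
    using subset_of_model_set_real_fun_sets[OF subset_of_model_set_union_translate[OF insert.IH[OF insert.prems]]]
    by (simp add: \<Lambda>'_def)
  moreover have "{x + f | x f. x \<in> \<Lambda> \<and> f \<in> insert t F} \<subseteq> \<Lambda>' \<union> (\<lambda>y. y + (t - f0)) ` \<Lambda>'"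
  proof
    fix z assume "z \<in> {x + f | x f. x \<in> \<Lambda> \<and> f \<in> insert t F}"
    then obtain x f where z: "z = x + f" "x \<in> \<Lambda>" "f \<in> insert t F"
      by blast
    show "z \<in> \<Lambda>' \<union> (\<lambda>y. y + (t - f0)) ` \<Lambda>'"
    proof (cases "f = t")
      case True
      have "z = (x + f0) + (t - f0)" "x + f0 \<in> \<Lambda>'"
        using z f0 True by (auto simp: \<Lambda>'_def)
      then show ?thesis
        by blast
    qed (use z in \<open>auto simp: \<Lambda>'_def\<close>)
  qed
  ultimately show ?case
    by (rule subset_of_model_set_mono)
qed

theorem proposition6p17:
  fixes \<Lambda> F :: "'g::{topological_ab_group_add,t2_space} set"
  assumes "locally_compact_space (euclidean :: 'g topology)"
    and "\<exists>K :: nat \<Rightarrow> 'g set. (\<forall>n. compact (K n)) \<and> (\<Union>n. K n) = UNIV"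
    and "subset_of_model_set TYPE('u) \<Lambda>"
    and "finite F" and "F \<noteq> {}"
  shows "subset_of_model_set TYPE(('g \<Rightarrow> real) set) {x + f | x f. x \<in> \<Lambda> \<and> f \<in> F}"
  using assms(4,5) subset_of_model_set_real_fun_sets[OF assms(3)] by (rule subset_of_model_set_plus_finite)

end
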